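(* Let $a\in\omega\setminus\{0\}$ and $h(n)=2^{(a^n)}$. Then $\mathrm{IOE}(h)\ge_S\mathcal D(1/a)$ and $\mathrm{AED}(h)\le_S\mathcal B(1/a)$.
   Context: A mass problem is a nonempty set of functions $\omega\to\omega$. $\mathcal B\le_S\mathcal C$ (equivalently $\mathcal C\ge_S\mathcal B$) means there is a Turing functional $\Phi$ with $\Phi^g\in\mathcal B$ for all $g\in\mathcal C$. For bit sequences $x,y$, $x\leftrightarrow y=\{n:x(n)=y(n)\}$; for $Z\subseteq\omega$, $\underline\rho(Z)=\liminf_n|Z\cap[0,n)|/n$. $\mathcal D(p)$ is the set of bit sequences $y$ with $\underline\rho(x\leftrightarrow y)\le p$ for every computable bit sequence $x$; $\mathcal B(p)$ is the set of bit sequences $y$ with $\underline\rho(x\leftrightarrow y)>p$ for every computable bit sequence $x$. $\mathrm{IOE}(h)$ is the set of functions $y:\omega\to\omega$ such that every computable $x$ with $x(n)<h(n)$ for all $n$ satisfies $x(n)=y(n)$ for infinitely many $n$; $\mathrm{AED}(h)$ is the set of functions $y$ with $y(n)<h(n)$ for all $n$ such that every computable $x$ satisfies $x(n)\neq y(n)$ for all but finitely many $n$. *)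

theory Defs
  imports Complex_Main "HOL-Library.Extended_Real" "HOL-Library.Liminf_Limsup"
begin

datatype recf =
    Zero
  | Succ
  | Proj nat
  | Orc nat
  | Comp recf "recf list"
  | Prim recf recf
  | Mn recf

inductive eval :: "(nat \<Rightarrow> nat) \<Rightarrow> recf \<Rightarrow> nat list \<Rightarrow> nat \<Rightarrow> bool"
  for g :: "nat \<Rightarrow> nat" where
  eval_Zero: "eval g Zero xs 0"
| eval_Succ: "eval g Succ (x # xs) (Suc x)"
| eval_Proj: "i < length xs \<Longrightarrow> eval g (Proj i) xs (xs ! i)"
| eval_Orc: "i < length xs \<Longrightarrow> eval g (Orc i) xs (g (xs ! i))"
| eval_Comp: "list_all2 (\<lambda>f y. eval g f xs y) fs ys \<Longrightarrow> eval g h ys z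
              \<Longrightarrow> eval g (Comp h fs) xs z"
| eval_Prim0: "eval g f xs y \<Longrightarrow> eval g (Prim f h) (0 # xs) y"
| eval_PrimS: "eval g (Prim f h) (n # xs) y \<Longrightarrow> eval g h (y # n # xs) z
              \<Longrightarrow> eval g (Prim f h) (Suc n # xs) z"
| eval_Mn: "eval g f (n # xs) 0 \<Longrightarrow> (\<forall>m<n. \<exists>k. eval g f (m # xs) (Suc k))
              \<Longrightarrow> eval g (Mn f) xs n"

text \<open>A function is computable if some program (not using the oracle) computes it.\<close>
definition computable :: "(nat \<Rightarrow> nat) \<Rightarrow> bool" where
  "computable x \<longleftrightarrow> (\<exists>f. \<forall>n. eval (\<lambda>_. 0) f [n] (x n))"

definition strong_le :: "(nat \<Rightarrow> nat) set \<Rightarrow> (nat \<Rightarrow> nat) set \<Rightarrow> bool" where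
  "strong_le B C \<longleftrightarrow> (\<exists>\<Phi>. \<forall>g\<in>C. \<exists>y\<in>B. \<forall>n. eval g \<Phi> [n] (y n))"

definition bitseq :: "(nat \<Rightarrow> nat) \<Rightarrow> bool" where
  "bitseq x \<longleftrightarrow> (\<forall>n. x n < 2)"

definition agree :: "(nat \<Rightarrow> nat) \<Rightarrow> (nat \<Rightarrow> nat) \<Rightarrow> nat set" where
  "agree x y = {n. x n = y n}"

definition lower_density :: "nat set \<Rightarrow> ereal" where
  "lower_density Z = liminf (\<lambda>n. ereal (real (card (Z \<inter> {..<n})) / real n))"

definition massD :: "real \<Rightarrow> (nat \<Rightarrow> nat) set" where
  "massD p = {y. bitseq y \<and> (\<forall>x. computable x \<and> bitseq x \<longrightarrow> lower_density (agree x y) \<le> ereal p)}"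

definition massB :: "real \<Rightarrow> (nat \<Rightarrow> nat) set" where
  "massB p = {y. bitseq y \<and> (\<forall>x. computable x \<and> bitseq x \<longrightarrow> lower_density (agree x y) > ereal p)}"

definition IOE :: "(nat \<Rightarrow> nat) \<Rightarrow> (nat \<Rightarrow> nat) set" where
  "IOE h = {y. \<forall>x. computable x \<and> (\<forall>n. x n < h n) \<longrightarrow> infinite {n. x n = y n}}"

definition AED :: "(nat \<Rightarrow> nat) \<Rightarrow> (nat \<Rightarrow> nat) set" where
  "AED h = {y. (\<forall>n. y n < h n) \<and> (\<forall>x. computable x \<longrightarrow> finite {n. x n = y n})}"

end

theory Submission
  imports Defs "HOL-Library.Infinite_Set"
begin

(* Cut the positions into blocks I_0 = {0} and I_n = [a^(n-1), a^n). A 0-1 string on I_n codes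
   a number below h(n) = 2^(a^n), and I_n fills a fraction (a-1)/a of [0, a^n); so two 0-1
   sequences that disagree everywhere on infinitely many blocks agree on a set of lower density
   at most 1/a. Decoding y in IOE(h) blockwise gives a member of D(1/a): for computable x, y hits
   the (computable) code of the complement of x on infinitely many blocks. Coding g in B(1/a)
   blockwise gives a member of AED(h): a computable function equal to the code infinitely often
   would, decoded and complemented, be a computable sequence contradicting g in B(1/a).
   For a = 1, B(1) is empty and the constant 0 lies in D(1). *)

section \<open>Functions computable uniformly in an oracle\<close>

definition oracle_computable ::
    "(nat \<Rightarrow> nat) set \<Rightarrow> nat \<Rightarrow> ((nat \<Rightarrow> nat) \<Rightarrow> nat list \<Rightarrow> nat) \<Rightarrow> bool" where
  "oracle_computable G k F \<longleftrightarrow> (\<exists>f. \<forall>g\<in>G. \<forall>xs. length xs = k \<longrightarrow> eval g f xs (F g xs))"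

lemma oracle_computable_cong:
  assumes "oracle_computable G k F"
    and "\<And>g xs. g \<in> G \<Longrightarrow> length xs = k \<Longrightarrow> F g xs = F' g xs"
  shows "oracle_computable G k F'"
  using assms unfolding oracle_computable_def by metis

lemma oracle_computable_zero: "oracle_computable G k (\<lambda>g xs. 0)"
  unfolding oracle_computable_def by (auto intro: eval.intros)

lemma oracle_computable_proj: "i < k \<Longrightarrow> oracle_computable G k (\<lambda>g xs. xs ! i)"
  unfolding oracle_computable_def by (rule exI[of _ "Proj i"]) (auto intro: eval.intros)

lemma oracle_computable_hd: "oracle_computable G (Suc k) (\<lambda>g xs. xs ! 0)"
  by (rule oracle_computable_proj) simp

lemma oracle_computable_oracle: "oracle_computable G (Suc 0) (\<lambda>g xs. g (xs ! 0))"
  unfolding oracle_computable_def by (rule exI[of _ "Orc 0"]) (auto intro: eval.intros)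

lemma oracle_computable_succ: "oracle_computable G (Suc 0) (\<lambda>g xs. Suc (xs ! 0))"
  unfolding oracle_computable_def
  by (rule exI[of _ Succ]) (auto intro: eval.intros simp: length_Suc_conv)

lemma oracle_computable_list:
  assumes "\<forall>F\<in>set Fs. oracle_computable G k F"
  shows "\<exists>fs. list_all2 (\<lambda>f F. \<forall>g\<in>G. \<forall>xs. length xs = k \<longrightarrow> eval g f xs (F g xs)) fs Fs"
  using assms
proof (induction Fs)
  case Nil
  show ?case by auto
next
  case (Cons F Fs)
  then obtain fs f where "list_all2 (\<lambda>f F. \<forall>g\<in>G. \<forall>xs. length xs = k \<longrightarrow> eval g f xs (F g xs)) fs Fs"
    and "\<forall>g\<in>G. \<forall>xs. length xs = k \<longrightarrow> eval g f xs (F g xs)"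
    unfolding oracle_computable_def by auto
  then show ?case by (intro exI[of _ "f # fs"]) auto
qed

lemma oracle_computable_comp:
  assumes "oracle_computable G (length Fs) H" and "\<forall>F\<in>set Fs. oracle_computable G k F"
  shows "oracle_computable G k (\<lambda>g xs. H g (map (\<lambda>F. F g xs) Fs))"
proof -
  obtain h where h: "\<forall>g\<in>G. \<forall>ys. length ys = length Fs \<longrightarrow> eval g h ys (H g ys)"
    using assms(1) unfolding oracle_computable_def by auto
  obtain fs where fs: "list_all2 (\<lambda>f F. \<forall>g\<in>G. \<forall>xs. length xs = k \<longrightarrow> eval g f xs (F g xs)) fs Fs"
    using oracle_computable_list[OF assms(2)] by auto
  show ?thesis
    unfolding oracle_computable_def
  proof (intro exI[of _ "Comp h fs"] ballI allI impI)
    fix g and xs :: "nat list"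
    assume "g \<in> G" and "length xs = k"
    then have "list_all2 (\<lambda>f y. eval g f xs y) fs (map (\<lambda>F. F g xs) Fs)"
      using fs by (auto simp: list.rel_map elim: list_all2_mono)
    moreover have "eval g h (map (\<lambda>F. F g xs) Fs) (H g (map (\<lambda>F. F g xs) Fs))"
      using h \<open>g \<in> G\<close> by auto
    ultimately show "eval g (Comp h fs) xs (H g (map (\<lambda>F. F g xs) Fs))"
      by (rule eval_Comp)
  qed
qed

lemma oracle_computable_prim:
  assumes "oracle_computable G k F" and "oracle_computable G (Suc (Suc k)) H"
    and "\<And>g xs. g \<in> G \<Longrightarrow> length xs = k \<Longrightarrow> R g (0 # xs) = F g xs"
    and "\<And>g n xs. g \<in> G \<Longrightarrow> length xs = k \<Longrightarrow> R g (Suc n # xs) = H g (R g (n # xs) # n # xs)"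
  shows "oracle_computable G (Suc k) R"
proof -
  obtain f where f: "\<forall>g\<in>G. \<forall>xs. length xs = k \<longrightarrow> eval g f xs (F g xs)"
    using assms(1) unfolding oracle_computable_def by auto
  obtain h where h: "\<forall>g\<in>G. \<forall>xs. length xs = Suc (Suc k) \<longrightarrow> eval g h xs (H g xs)"
    using assms(2) unfolding oracle_computable_def by auto
  have "eval g (Prim f h) (n # xs) (R g (n # xs))" if "g \<in> G" "length xs = k" for g n xs
  proof (induction n)
    case 0
    show ?case using f assms(3) that by (auto intro: eval_Prim0)
  next
    case (Suc n)
    then show ?case using h assms(4) that by (auto intro: eval_PrimS)
  qed
  then show ?thesis
    unfolding oracle_computable_def by (intro exI[of _ "Prim f h"]) (auto simp: length_Suc_conv)
qed

lemma oracle_computable_tl: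
  assumes "oracle_computable G k F"
  shows "oracle_computable G (Suc k) (\<lambda>g xs. F g (tl xs))"
proof -
  have tl_eq: "map (nth xs) [Suc 0..<Suc k] = tl xs" if len: "length xs = Suc k" for xs :: "nat list"
  proof -
    obtain y ys where "xs = y # ys" and "length ys = k"
      using len length_Suc_conv[of xs k] by blast
    moreover have "[Suc 0..<Suc k] = map Suc [0..<k]"
      by (simp add: map_Suc_upt)
    ultimately show ?thesis
      using map_nth[of ys] by (simp add: comp_def)
  qed
  have "oracle_computable G (Suc k)
      (\<lambda>g xs. F g (map (\<lambda>F. F g xs) (map (\<lambda>i g xs. xs ! i) [Suc 0..<Suc k])))"
    by (rule oracle_computable_comp) (auto intro!: oracle_computable_proj simp: assms simp del: upt_Suc)
  then show ?thesis
    by (rule oracle_computable_cong) (simp add: comp_def tl_eq del: upt_Suc)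
qed

lemma oracle_computable_subst:
  assumes "oracle_computable G (Suc k) F" and "oracle_computable G k E"
  shows "oracle_computable G k (\<lambda>g xs. F g (E g xs # xs))"
proof -
  have nth_eq: "map (nth xs) [0..<k] = xs" if "length xs = k" for xs :: "nat list"
    using map_nth[of xs] that by simp
  have "oracle_computable G k (\<lambda>g xs. F g (map (\<lambda>F. F g xs) (E # map (\<lambda>i g xs. xs ! i) [0..<k])))"
    by (rule oracle_computable_comp) (auto intro!: oracle_computable_proj simp: assms)
  then show ?thesis
    by (rule oracle_computable_cong) (simp add: comp_def nth_eq)
qed

lemma oracle_computable_comp1:
  "oracle_computable G (Suc 0) H \<Longrightarrow> oracle_computable G k F \<Longrightarrow>
    oracle_computable G k (\<lambda>g xs. H g [F g xs])"
  using oracle_computable_comp[of G "[F]" H k] by simp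

lemma oracle_computable_comp2:
  "oracle_computable G 2 H \<Longrightarrow> oracle_computable G k F1 \<Longrightarrow> oracle_computable G k F2 \<Longrightarrow>
    oracle_computable G k (\<lambda>g xs. H g [F1 g xs, F2 g xs])"
  using oracle_computable_comp[of G "[F1, F2]" H k] by (simp add: numeral_2_eq_2)

lemma oracle_computable_const: "oracle_computable G k (\<lambda>g xs. c)"
proof (induction c)
  case 0
  show ?case by (rule oracle_computable_zero)
next
  case (Suc c)
  from oracle_computable_comp1[OF oracle_computable_succ Suc] show ?case by simp
qed

lemma oracle_computable_add:
  "oracle_computable G k F1 \<Longrightarrow> oracle_computable G k F2 \<Longrightarrow>
    oracle_computable G k (\<lambda>g xs. F1 g xs + F2 g xs)"
proof -
  have "oracle_computable G (Suc (Suc (Suc 0))) (\<lambda>g xs. Suc (xs ! 0))"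
    by (rule oracle_computable_comp1[OF oracle_computable_succ oracle_computable_proj, simplified]) simp
  then have "oracle_computable G (Suc (Suc 0)) (\<lambda>g xs. xs ! 0 + xs ! 1)"
    by (rule oracle_computable_prim[OF oracle_computable_hd]) (auto simp: length_Suc_conv)
  then show "oracle_computable G k F1 \<Longrightarrow> oracle_computable G k F2 \<Longrightarrow> ?thesis"
    using oracle_computable_comp2[of G "\<lambda>g xs. xs ! 0 + xs ! 1"] by (simp add: numeral_2_eq_2)
qed

lemma oracle_computable_mult:
  "oracle_computable G k F1 \<Longrightarrow> oracle_computable G k F2 \<Longrightarrow>
    oracle_computable G k (\<lambda>g xs. F1 g xs * F2 g xs)"
proof -
  have "oracle_computable G (Suc (Suc (Suc 0))) (\<lambda>g xs. xs ! 0 + xs ! 2)"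
    by (rule oracle_computable_add; rule oracle_computable_proj; simp)
  then have "oracle_computable G (Suc (Suc 0)) (\<lambda>g xs. xs ! 0 * xs ! 1)"
    by (rule oracle_computable_prim[OF oracle_computable_zero]) (auto simp: length_Suc_conv numeral_2_eq_2)
  then show "oracle_computable G k F1 \<Longrightarrow> oracle_computable G k F2 \<Longrightarrow> ?thesis"
    using oracle_computable_comp2[of G "\<lambda>g xs. xs ! 0 * xs ! 1"] by (simp add: numeral_2_eq_2)
qed

lemma oracle_computable_diff:
  "oracle_computable G k F1 \<Longrightarrow> oracle_computable G k F2 \<Longrightarrow>
    oracle_computable G k (\<lambda>g xs. F1 g xs - F2 g xs)"
proof -
  have "oracle_computable G (Suc 0) (\<lambda>g xs. xs ! 0 - 1)"
    by (rule oracle_computable_prim[OF oracle_computable_zero oracle_computable_proj[of 1]]) auto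
  from oracle_computable_comp1[OF this oracle_computable_hd]
  have "oracle_computable G (Suc (Suc (Suc 0))) (\<lambda>g xs. xs ! 0 - 1)"
    by simp
  then have "oracle_computable G (Suc (Suc 0)) (\<lambda>g xs. xs ! 1 - xs ! 0)"
    by (rule oracle_computable_prim[OF oracle_computable_hd]) (auto simp: length_Suc_conv)
  then show "oracle_computable G k F1 \<Longrightarrow> oracle_computable G k F2 \<Longrightarrow> ?thesis"
    using oracle_computable_comp2[of G "\<lambda>g xs. xs ! 1 - xs ! 0" k F2 F1] by (simp add: numeral_2_eq_2)
qed

lemma oracle_computable_power:
  "oracle_computable G k F1 \<Longrightarrow> oracle_computable G k F2 \<Longrightarrow>
    oracle_computable G k (\<lambda>g xs. F1 g xs ^ F2 g xs)"
proof -
  have "oracle_computable G (Suc (Suc (Suc 0))) (\<lambda>g xs. xs ! 0 * xs ! 2)"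
    by (rule oracle_computable_mult; rule oracle_computable_proj; simp)
  then have "oracle_computable G (Suc (Suc 0)) (\<lambda>g xs. xs ! 1 ^ xs ! 0)"
    by (rule oracle_computable_prim[OF oracle_computable_const])
      (auto simp: length_Suc_conv numeral_2_eq_2)
  then show "oracle_computable G k F1 \<Longrightarrow> oracle_computable G k F2 \<Longrightarrow> ?thesis"
    using oracle_computable_comp2[of G "\<lambda>g xs. xs ! 1 ^ xs ! 0" k F2 F1] by (simp add: numeral_2_eq_2)
qed

lemma oracle_computable_le:
  assumes "oracle_computable G k F1" and "oracle_computable G k F2"
  shows "oracle_computable G k (\<lambda>g xs. of_bool (F1 g xs \<le> F2 g xs))"
  by (rule oracle_computable_cong[OF oracle_computable_diff[OF oracle_computable_const[where c=1]
        oracle_computable_diff[OF assms]]]) auto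

lemma oracle_computable_mod2:
  "oracle_computable G k F \<Longrightarrow> oracle_computable G k (\<lambda>g xs. F g xs mod 2)"
proof -
  have "oracle_computable G (Suc (Suc 0)) (\<lambda>g xs. 1 - xs ! 0)"
    by (rule oracle_computable_diff; rule oracle_computable_const oracle_computable_proj; simp)
  then have "oracle_computable G (Suc 0) (\<lambda>g xs. xs ! 0 mod 2)"
    by (rule oracle_computable_prim[OF oracle_computable_zero]) (auto simp: mod_Suc)
  then show "oracle_computable G k F \<Longrightarrow> ?thesis"
    using oracle_computable_comp1 by fastforce
qed

lemma oracle_computable_div2: "oracle_computable G (Suc 0) (\<lambda>g xs. xs ! 0 div 2)"
proof -
  have H: "oracle_computable G (Suc (Suc 0)) (\<lambda>g xs. xs ! 0 + xs ! 1 mod 2)"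
    by (intro oracle_computable_add oracle_computable_mod2 oracle_computable_proj) auto
  have Suc_div2: "Suc n div 2 = n div 2 + n mod 2" for n :: nat
    by presburger
  show ?thesis
    by (rule oracle_computable_prim[OF oracle_computable_zero H]) (auto simp: Suc_div2)
qed

lemma oracle_computable_div_pow2:
  "oracle_computable G k F1 \<Longrightarrow> oracle_computable G k F2 \<Longrightarrow>
    oracle_computable G k (\<lambda>g xs. F2 g xs div 2 ^ F1 g xs)"
proof -
  have "oracle_computable G (Suc (Suc (Suc 0))) (\<lambda>g xs. xs ! 0 div 2)"
    using oracle_computable_comp1[OF oracle_computable_div2 oracle_computable_hd] by simp
  then have "oracle_computable G (Suc (Suc 0)) (\<lambda>g xs. xs ! 1 div 2 ^ xs ! 0)"
    by (rule oracle_computable_prim[OF oracle_computable_hd])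
      (auto simp: length_Suc_conv power_Suc2 div_mult2_eq simp del: power_Suc)
  then show "oracle_computable G k F1 \<Longrightarrow> oracle_computable G k F2 \<Longrightarrow> ?thesis"
    using oracle_computable_comp2[of G "\<lambda>g xs. xs ! 1 div 2 ^ xs ! 0"] by (simp add: numeral_2_eq_2)
qed

lemma oracle_computable_sum_lessThan:
  assumes "oracle_computable G (Suc k) F" and "oracle_computable G k M"
  shows "oracle_computable G k (\<lambda>g xs. \<Sum>j<M g xs. F g (j # xs))"
proof -
  have "oracle_computable G (Suc (Suc k)) (\<lambda>g xs. xs ! 0 + F g (tl xs))"
    by (rule oracle_computable_add[OF oracle_computable_proj oracle_computable_tl[OF assms(1)]]) simp
  then have "oracle_computable G (Suc k) (\<lambda>g xs. \<Sum>j<hd xs. F g (j # tl xs))"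
    by (rule oracle_computable_prim[OF oracle_computable_zero]) auto
  from oracle_computable_subst[OF this assms(2)] show ?thesis by simp
qed

lemma computable_iff_oracle_computable:
  "computable x \<longleftrightarrow> oracle_computable {\<lambda>_. 0} (Suc 0) (\<lambda>g xs. x (xs ! 0))"
proof
  assume "computable x"
  then obtain f where "\<forall>n. eval (\<lambda>_. 0) f [n] (x n)"
    unfolding computable_def by auto
  then show "oracle_computable {\<lambda>_. 0} (Suc 0) (\<lambda>g xs. x (xs ! 0))"
    unfolding oracle_computable_def by (intro exI[of _ f]) (auto simp: length_Suc_conv)
next
  assume "oracle_computable {\<lambda>_. 0} (Suc 0) (\<lambda>g xs. x (xs ! 0))"
  then obtain f where "\<forall>xs. length xs = Suc 0 \<longrightarrow> eval (\<lambda>_. 0) f xs (x (xs ! 0))"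
    unfolding oracle_computable_def by auto
  then have "eval (\<lambda>_. 0) f [n] (x n)" for n
    by (metis length_Cons list.size(3) nth_Cons_0)
  then show "computable x"
    unfolding computable_def by auto
qed

lemma strong_leI:
  assumes "oracle_computable C (Suc 0) (\<lambda>g xs. \<Phi> g (xs ! 0))" and "\<And>g. g \<in> C \<Longrightarrow> \<Phi> g \<in> B"
  shows "strong_le B C"
proof -
  obtain f where f: "\<forall>g\<in>C. \<forall>xs. length xs = Suc 0 \<longrightarrow> eval g f xs (\<Phi> g (xs ! 0))"
    using assms(1) unfolding oracle_computable_def by auto
  have "eval g f [n] (\<Phi> g n)" if "g \<in> C" for g n
    using spec[OF bspec[OF f that], of "[n]"] by simp
  then show ?thesis
    unfolding strong_le_def using assms(2) by blast
qed

definition binary_digit :: "nat \<Rightarrow> nat \<Rightarrow> nat" where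
  "binary_digit i m = m div 2 ^ i mod 2"

lemma oracle_computable_binary_digit:
  "oracle_computable G k F1 \<Longrightarrow> oracle_computable G k F2 \<Longrightarrow>
    oracle_computable G k (\<lambda>g xs. binary_digit (F1 g xs) (F2 g xs))"
  unfolding binary_digit_def by (intro oracle_computable_mod2 oracle_computable_div_pow2)

lemma sum_binary_Suc:
  "(\<Sum>j<Suc L. c j * 2 ^ j) = c 0 + 2 * (\<Sum>j<L. c (Suc j) * (2::nat) ^ j)"
  by (subst sum.lessThan_Suc_shift) (simp add: sum_distrib_left mult.left_commute del: sum.lessThan_Suc)

lemma binary_digit_sum:
  assumes "\<forall>j<L. c j < 2" and "i < L"
  shows "binary_digit i (\<Sum>j<L. c j * 2 ^ j) = c i"
  using assms
proof (induction i arbitrary: L c)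
  case 0
  then obtain L' where L: "L = Suc L'" by (cases L) auto
  have "c 0 < 2" using 0 by (simp add: L)
  then show ?case unfolding L sum_binary_Suc binary_digit_def by simp
next
  case (Suc i)
  then obtain L' where L: "L = Suc L'" by (cases L) auto
  have "binary_digit (Suc i) m = binary_digit i (m div 2)" for m
    unfolding binary_digit_def by (simp add: div_mult2_eq)
  moreover have "c 0 < 2" using Suc.prems by auto
  moreover have "binary_digit i (\<Sum>j<L'. c (Suc j) * 2 ^ j) = c (Suc i)"
    using Suc.IH[of L' "\<lambda>j. c (Suc j)"] Suc.prems L by auto
  ultimately show ?case unfolding L sum_binary_Suc by simp
qed

lemma sum_binary_less:
  assumes "\<forall>j<L. c j < 2"
  shows "(\<Sum>j<L. c j * 2 ^ j) < (2::nat) ^ L"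
  using assms
proof (induction L)
  case 0
  show ?case by simp
next
  case (Suc L)
  then have "(\<Sum>j<L. c j * 2 ^ j) + c L * 2 ^ L < 2 ^ L + 2 ^ L"
    by (intro add_less_le_mono) auto
  then show ?case by simp
qed

section \<open>Blocks of positions\<close>

text \<open>Block n is [block_start a n, a ^ n). For a \<ge> 2, block_index a p is the least n with
  p < a ^ n; it is written as a bounded count so that its computability is immediate.\<close>

definition block_start :: "nat \<Rightarrow> nat \<Rightarrow> nat" where
  "block_start a n = (if n = 0 then 0 else a ^ (n - 1))"

definition block_index :: "nat \<Rightarrow> nat \<Rightarrow> nat" where
  "block_index a p = (\<Sum>m<p. of_bool (a ^ m \<le> p))"

definition block_code :: "nat \<Rightarrow> (nat \<Rightarrow> nat) \<Rightarrow> nat \<Rightarrow> nat" where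
  "block_code a c n = (\<Sum>j < a ^ n - block_start a n. c (block_start a n + j) * 2 ^ j)"

definition block_decode :: "nat \<Rightarrow> (nat \<Rightarrow> nat) \<Rightarrow> nat \<Rightarrow> nat" where
  "block_decode a v p =
    binary_digit (p - block_start a (block_index a p)) (v (block_index a p))"

lemma block_index_eq:
  assumes "2 \<le> a" and "block_start a n \<le> p" and "p < a ^ n"
  shows "block_index a p = n"
proof -
  have "{..<p} \<inter> {m. a ^ m \<le> p} = {..<n}"
  proof (intro set_eqI iffI)
    fix m
    assume "m \<in> {..<p} \<inter> {m. a ^ m \<le> p}"
    then have "a ^ m < a ^ n" using assms(3) by auto
    then show "m \<in> {..<n}" using assms(1) by (simp add: power_strict_increasing_iff)
  next
    fix m
    assume "m \<in> {..<n}"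
    then have "a ^ m \<le> a ^ (n - 1)" and "block_start a n = a ^ (n - 1)"
      using assms(1) by (auto intro: power_increasing simp: block_start_def)
    moreover have "m < a ^ m" using assms(1) by (intro power_gt_expt) auto
    ultimately show "m \<in> {..<p} \<inter> {m. a ^ m \<le> p}" using assms(2) by auto
  qed
  then show ?thesis unfolding block_index_def by simp
qed

lemma block_code_less:
  assumes "bitseq c"
  shows "block_code a c n < 2 ^ (a ^ n)"
proof -
  have "block_code a c n < 2 ^ (a ^ n - block_start a n)"
    unfolding block_code_def using assms by (intro sum_binary_less) (auto simp: bitseq_def)
  also have "\<dots> \<le> 2 ^ (a ^ n)" by (intro power_increasing) auto
  finally show ?thesis .
qed

lemma block_decode_eq:
  assumes "2 \<le> a" and "bitseq c" and "v n = block_code a c n"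
    and "block_start a n \<le> p" and "p < a ^ n"
  shows "block_decode a v p = c p"
proof -
  have "block_index a p = n" using assms(1,4,5) by (rule block_index_eq)
  then have "block_decode a v p = binary_digit (p - block_start a n) (block_code a c n)"
    unfolding block_decode_def using assms(3) by simp
  also have "\<dots> = c p"
    unfolding block_code_def using assms(2,4,5) by (subst binary_digit_sum) (auto simp: bitseq_def)
  finally show ?thesis .
qed

lemma oracle_computable_block_start:
  assumes "oracle_computable G k E"
  shows "oracle_computable G k (\<lambda>g xs. block_start a (E g xs))"
proof -
  have "oracle_computable G k (\<lambda>g xs. a ^ (E g xs - 1) * of_bool (1 \<le> E g xs))"
    by (intro oracle_computable_mult oracle_computable_power oracle_computable_diff
        oracle_computable_le oracle_computable_const assms)
  then show ?thesis
    by (rule oracle_computable_cong) (simp add: block_start_def)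
qed

lemma oracle_computable_block_index:
  assumes "oracle_computable G k E"
  shows "oracle_computable G k (\<lambda>g xs. block_index a (E g xs))"
proof -
  have "oracle_computable G (Suc (Suc 0)) (\<lambda>g ys. of_bool (a ^ (ys ! 0) \<le> ys ! 1))"
    by (intro oracle_computable_le oracle_computable_power oracle_computable_const oracle_computable_proj) auto
  then have "oracle_computable G (Suc 0) (\<lambda>g xs. \<Sum>j<xs ! 0. of_bool (a ^ ((j # xs) ! 0) \<le> (j # xs) ! 1))"
    by (rule oracle_computable_sum_lessThan[OF _ oracle_computable_hd])
  then have "oracle_computable G (Suc 0) (\<lambda>g xs. block_index a (xs ! 0))"
    by (rule oracle_computable_cong) (simp add: block_index_def)
  from oracle_computable_comp1[OF this assms] show ?thesis by simp
qed

lemma oracle_computable_block_code: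
  assumes "oracle_computable G (Suc 0) (\<lambda>g xs. c g (xs ! 0))" and "oracle_computable G k E"
  shows "oracle_computable G k (\<lambda>g xs. block_code a (c g) (E g xs))"
proof -
  have c: "oracle_computable G k' (\<lambda>g xs. c g (F g xs))" if "oracle_computable G k' F" for k' F
    using oracle_computable_comp1[OF assms(1) that] by simp
  have "oracle_computable G (Suc (Suc 0)) (\<lambda>g ys. block_start a (ys ! 1) + ys ! 0)"
    by (intro oracle_computable_add oracle_computable_block_start oracle_computable_proj) auto
  then have "oracle_computable G (Suc (Suc 0)) (\<lambda>g ys. c g (block_start a (ys ! 1) + ys ! 0) * 2 ^ (ys ! 0))"
    by (intro oracle_computable_mult c oracle_computable_power oracle_computable_const oracle_computable_hd)
  then have "oracle_computable G (Suc 0) (\<lambda>g xs.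
      \<Sum>j < a ^ (xs ! 0) - block_start a (xs ! 0). c g (block_start a ((j # xs) ! 1) + (j # xs) ! 0) * 2 ^ ((j # xs) ! 0))"
    by (rule oracle_computable_sum_lessThan)
      (intro oracle_computable_diff oracle_computable_power oracle_computable_const
        oracle_computable_block_start oracle_computable_hd)
  then have "oracle_computable G (Suc 0) (\<lambda>g xs. block_code a (c g) (xs ! 0))"
    by (rule oracle_computable_cong) (simp add: block_code_def)
  from oracle_computable_comp1[OF this assms(2)] show ?thesis by simp
qed

lemma oracle_computable_block_decode:
  assumes "oracle_computable G (Suc 0) (\<lambda>g xs. v g (xs ! 0))" and "oracle_computable G k E"
  shows "oracle_computable G k (\<lambda>g xs. block_decode a (v g) (E g xs))"
proof -
  have "oracle_computable G k (\<lambda>g xs. v g (block_index a (E g xs)))"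
    using oracle_computable_comp1[OF assms(1) oracle_computable_block_index[OF assms(2)]] by simp
  then show ?thesis
    unfolding block_decode_def
    by (intro oracle_computable_binary_digit oracle_computable_diff oracle_computable_block_start
        oracle_computable_block_index assms(2))
qed

lemma lower_density_le_if_frequently:
  assumes "\<exists>\<^sub>F n in sequentially. ereal (real (card (Z \<inter> {..<n})) / real n) \<le> c"
  shows "lower_density Z \<le> c"
proof (rule ccontr)
  assume "\<not> lower_density Z \<le> c"
  then have "\<forall>\<^sub>F n in sequentially. c < ereal (real (card (Z \<inter> {..<n})) / real n)"
    unfolding lower_density_def by (intro less_LiminfD) simp
  then have "\<forall>\<^sub>F n in sequentially. \<not> ereal (real (card (Z \<inter> {..<n})) / real n) \<le> c"
    by (rule eventually_mono) simp
  with assms show False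
    by (simp add: frequently_def)
qed

lemma lower_density_le_1: "lower_density Z \<le> 1"
proof (rule lower_density_le_if_frequently)
  have "ereal (real (card (Z \<inter> {..<n})) / real n) \<le> 1" for n
  proof -
    have "card (Z \<inter> {..<n}) \<le> n"
      using card_mono[of "{..<n}" "Z \<inter> {..<n}"] by auto
    then show ?thesis
      by (cases "n = 0") (auto simp: divide_le_eq_1)
  qed
  then show "\<exists>\<^sub>F n in sequentially. ereal (real (card (Z \<inter> {..<n})) / real n) \<le> 1"
    unfolding frequently_sequentially by blast
qed

text \<open>On [0, a ^ n), agreement is only possible outside block n, i.e. below a ^ (n - 1).\<close>

lemma lower_density_agree_le_if_disagree_on_blocks:
  assumes "2 \<le> a"
    and "infinite {n. \<forall>p. block_start a n \<le> p \<and> p < a ^ n \<longrightarrow> x p \<noteq> z p}"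
  shows "lower_density (agree x z) \<le> ereal (1 / real a)"
proof (rule lower_density_le_if_frequently, unfold frequently_sequentially, intro allI)
  fix N
  obtain n where "Suc N \<le> n" and disagree: "\<forall>p. block_start a n \<le> p \<and> p < a ^ n \<longrightarrow> x p \<noteq> z p"
    using assms(2) unfolding infinite_nat_iff_unbounded_le by blast
  then have start: "block_start a n = a ^ (n - 1)" and an: "a ^ n = a * a ^ (n - 1)"
    by (auto simp: block_start_def power_eq_if)
  have "agree x z \<inter> {..<a ^ n} \<subseteq> {..<a ^ (n - 1)}"
    using disagree start unfolding agree_def by (auto simp: not_less[symmetric])
  then have "card (agree x z \<inter> {..<a ^ n}) \<le> a ^ (n - 1)"
    using card_mono[of "{..<a ^ (n - 1)}"] by fastforce
  then have "real (card (agree x z \<inter> {..<a ^ n})) / real (a ^ n) \<le> real (a ^ (n - 1)) / real (a ^ n)"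
    by (intro divide_right_mono) auto
  also have "\<dots> = 1 / real a"
    using assms(1) unfolding an by simp
  finally have "ereal (real (card (agree x z \<inter> {..<a ^ n})) / real (a ^ n)) \<le> ereal (1 / real a)"
    by simp
  moreover have "N \<le> a ^ n"
    using \<open>Suc N \<le> n\<close> self_le_ge2_pow[OF assms(1), of n] by simp
  ultimately show "\<exists>m\<ge>N. ereal (real (card (agree x z \<inter> {..<m})) / real m) \<le> ereal (1 / real a)"
    by blast
qed

section \<open>The two reductions\<close>

lemma bitseq_one_minus: "bitseq (\<lambda>p. 1 - x p)"
  unfolding bitseq_def by (intro allI) linarith

lemma one_minus_neq: "(b::nat) < 2 \<Longrightarrow> b \<noteq> 1 - b"
  by (cases b) auto

lemma massD_le_IOE:
  assumes "2 \<le> a"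
  shows "strong_le (massD (1 / real a)) (IOE (\<lambda>n. 2 ^ (a ^ n)))"
proof (rule strong_leI)
  show "oracle_computable (IOE (\<lambda>n. 2 ^ (a ^ n))) (Suc 0) (\<lambda>g xs. block_decode a g (xs ! 0))"
    by (intro oracle_computable_block_decode oracle_computable_oracle oracle_computable_hd)
next
  fix g
  assume g: "g \<in> IOE (\<lambda>n. 2 ^ (a ^ n))"
  have "bitseq (block_decode a g)"
    unfolding bitseq_def block_decode_def binary_digit_def by simp
  moreover have "lower_density (agree x (block_decode a g)) \<le> ereal (1 / real a)"
    if x: "computable x" "bitseq x" for x
  proof -
    let ?x' = "block_code a (\<lambda>p. 1 - x p)"
    have "computable ?x'"
      using x(1) unfolding computable_iff_oracle_computable
      by (intro oracle_computable_block_code oracle_computable_diff oracle_computable_const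
          oracle_computable_hd)
    moreover have "?x' n < 2 ^ (a ^ n)" for n
      using bitseq_one_minus by (rule block_code_less)
    ultimately have "infinite {n. ?x' n = g n}"
      using g unfolding IOE_def by auto
    moreover have "{n. ?x' n = g n} \<subseteq>
        {n. \<forall>p. block_start a n \<le> p \<and> p < a ^ n \<longrightarrow> x p \<noteq> block_decode a g p}"
    proof (intro subsetI CollectI allI impI)
      fix n p
      assume "n \<in> {n. ?x' n = g n}" and "block_start a n \<le> p \<and> p < a ^ n"
      then have "block_decode a g p = 1 - x p"
        by (intro block_decode_eq[OF assms bitseq_one_minus]) auto
      then show "x p \<noteq> block_decode a g p"
        using x(2) one_minus_neq unfolding bitseq_def by simp
    qed
    ultimately show ?thesis
      by (intro lower_density_agree_le_if_disagree_on_blocks[OF assms]) (rule infinite_super)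
  qed
  ultimately show "block_decode a g \<in> massD (1 / real a)"
    unfolding massD_def by blast
qed

lemma AED_le_massB:
  assumes "2 \<le> a"
  shows "strong_le (AED (\<lambda>n. 2 ^ (a ^ n))) (massB (1 / real a))"
proof (rule strong_leI)
  show "oracle_computable (massB (1 / real a)) (Suc 0) (\<lambda>g xs. block_code a g (xs ! 0))"
    by (intro oracle_computable_block_code oracle_computable_oracle oracle_computable_hd)
next
  fix g
  assume g: "g \<in> massB (1 / real a)"
  then have "bitseq g"
    unfolding massB_def by simp
  have "finite {n. x n = block_code a g n}" if "computable x" for x
  proof (rule ccontr)
    assume "infinite {n. x n = block_code a g n}"
    let ?x' = "\<lambda>p. 1 - block_decode a x p"
    have "computable ?x'"
      using \<open>computable x\<close> unfolding computable_iff_oracle_computable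
      by (intro oracle_computable_diff oracle_computable_const oracle_computable_block_decode
          oracle_computable_hd)
    moreover have "bitseq ?x'"
      by (rule bitseq_one_minus)
    ultimately have "lower_density (agree ?x' g) > ereal (1 / real a)"
      using g unfolding massB_def by auto
    moreover have "{n. x n = block_code a g n} \<subseteq>
        {n. \<forall>p. block_start a n \<le> p \<and> p < a ^ n \<longrightarrow> ?x' p \<noteq> g p}"
    proof (intro subsetI CollectI allI impI)
      fix n p
      assume "n \<in> {n. x n = block_code a g n}" and "block_start a n \<le> p \<and> p < a ^ n"
      then have "block_decode a x p = g p"
        by (intro block_decode_eq[OF assms \<open>bitseq g\<close>]) auto
      then show "?x' p \<noteq> g p"
        using \<open>bitseq g\<close> one_minus_neq[THEN not_sym] unfolding bitseq_def by simp
    qed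
    then have "lower_density (agree ?x' g) \<le> ereal (1 / real a)"
      using \<open>infinite {n. x n = block_code a g n}\<close>
      by (intro lower_density_agree_le_if_disagree_on_blocks[OF assms]) (rule infinite_super)
    ultimately show False
      by simp
  qed
  moreover have "block_code a g n < 2 ^ (a ^ n)" for n
    using \<open>bitseq g\<close> by (rule block_code_less)
  ultimately show "block_code a g \<in> AED (\<lambda>n. 2 ^ (a ^ n))"
    unfolding AED_def by simp
qed

section \<open>The degenerate case a = 1\<close>

lemma lower_density_le: "1 \<le> p \<Longrightarrow> lower_density Z \<le> ereal p"
  using order.trans[OF lower_density_le_1, of "ereal p"] by simp

lemma massB_eq_empty:
  assumes "1 \<le> p"
  shows "massB p = {}"
proof -
  have "computable (\<lambda>_. 0)" and "bitseq (\<lambda>_. 0)"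
    unfolding computable_def bitseq_def by (auto intro: eval.intros)
  then have "lower_density (agree (\<lambda>_. 0) y) > ereal p" if "y \<in> massB p" for y
    using that unfolding massB_def by blast
  then show ?thesis
    using lower_density_le[OF assms] by (meson equals0I not_le)
qed

lemma zero_mem_massD: "1 \<le> p \<Longrightarrow> (\<lambda>_. 0) \<in> massD p"
  unfolding massD_def bitseq_def by (simp add: lower_density_le)

lemma strong_le_empty: "strong_le B {}"
  unfolding strong_le_def by simp

lemma strong_le_zero: "(\<lambda>_. 0) \<in> B \<Longrightarrow> strong_le B C"
  unfolding strong_le_def by (intro exI[of _ Zero]) (auto intro: eval.intros)

theorem mainTheorem5:
  fixes a :: nat and h :: "nat \<Rightarrow> nat"
  assumes "a \<noteq> 0"
    and "\<And>n. h n = 2 ^ (a ^ n)"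
  shows "strong_le (massD (1 / real a)) (IOE h) \<and> strong_le (AED h) (massB (1 / real a))"
proof -
  have h: "h = (\<lambda>n. 2 ^ (a ^ n))"
    using assms(2) by auto
  show ?thesis
  proof (cases "a = 1")
    case True
    then show ?thesis
      using zero_mem_massD massB_eq_empty by (simp add: strong_le_zero strong_le_empty)
  next
    case False
    then have "2 \<le> a"
      using assms(1) by simp
    then show ?thesis
      unfolding h using massD_le_IOE AED_le_massB by blast
  qed
qed

end
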